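(* Let $X$ be a set and $\{d_r\colon X\times X\to\mathbb{R}_{\ge0}\cup\{\infty\}\}_{r>0}$ a family satisfying the weaker $\{d_r\}$-axioms (see context). Then the $D$-topology of the diffeology on $X$ induced by $\{d_r\}_{r>0}$ is finer than the topology on $X$ induced by $\{d_r\}_{r>0}$, namely the topology in which $W\subset X$ is open iff for every $x\in W$ there are $r,\varepsilon>0$ with $\{y\in X\mid d_r(x,y)<\varepsilon\}\subset W$.
   Context: The weaker $\{d_r\}$-axioms, required for all $x,y,z\in X$: (Self-distance) $d_r(x,x)=0$ for all $r>0$. (Upper semi-continuity) if $r_1\le r_2$ then $d_{r_1}(x,y)\le d_{r_2}(x,y)$; and if $d_r(x,y)<\varepsilon$ there is $\delta>0$ with $d_{r+\delta}(x,y)<\varepsilon$. (Weaker triangle inequality) for $r_1,r_2,r_3>0$, if $d_{r_1+r_2+r_3}(x,y)<r_3$ and $d_{r_1+r_2+r_3}(y,z)<r_2$, then $d_{r_1}(x,z)\le d_{r_1+r_2+r_3}(x,y)+d_{r_1+r_2+r_3}(y,z)$. The diffeology induced by $\{d_r\}$ consists of the maps $p\colon U_p\to X$ ($U_p$ open in some $\mathbb{R}^n$) such that for each $t_0\in U_p$ there is $\delta>0$ with (1) $t\mapsto d_r(p(t_0),p(t))$ real-valued and continuous on the open ball $B_\delta(t_0)$ for every $r>0$, and (2) for each $t_1\in B_\delta(t_0)\setminus p^{-1}(p(t_0))$ and each $r>0$, $t\mapsto d_r(p(t_1),p(t))$ is smooth at $t_0$ (this set is a diffeology). The $D$-topology of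 a diffeology is the largest topology on $X$ for which all plots are continuous, i.e. $W\subset X$ is $D$-open iff $p^{-1}(W)$ is open for every plot $p$. *)

theory Defs
  imports "HOL-Analysis.Analysis" "HOL-Library.Extended_Nonnegative_Real"
begin

primrec Ck_on :: "nat \<Rightarrow> 'n::euclidean_space set \<Rightarrow> ('n \<Rightarrow> real) \<Rightarrow> bool" where
  "Ck_on 0 V f = continuous_on V f"
| "Ck_on (Suc k) V f =
     ((\<forall>t\<in>V. f differentiable (at t)) \<and>
      (\<forall>i\<in>Basis. Ck_on k V (\<lambda>t. frechet_derivative f (at t) i)))"

definition smooth_at_pt :: "('n::euclidean_space \<Rightarrow> ennreal) \<Rightarrow> 'n \<Rightarrow> bool" where
  "smooth_at_pt f t0 \<longleftrightarrow>
     (\<exists>V. open V \<and> t0 \<in> V \<and> (\<forall>t\<in>V. f t \<noteq> \<infinity>) \<and>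
          (\<forall>k. Ck_on k V (\<lambda>t. enn2real (f t))))"

text \<open>The weaker {d_r}-axioms; d r x y is d_r(x,y), only r > 0 is relevant.\<close>
definition weaker_dr_axioms :: "(real \<Rightarrow> 'a \<Rightarrow> 'a \<Rightarrow> ennreal) \<Rightarrow> bool" where
  "weaker_dr_axioms d \<longleftrightarrow>
     (\<forall>x r. r > 0 \<longrightarrow> d r x x = 0) \<and>
     (\<forall>x y r1 r2. 0 < r1 \<longrightarrow> r1 \<le> r2 \<longrightarrow> d r1 x y \<le> d r2 x y) \<and>
     (\<forall>x y r (\<epsilon>::real). r > 0 \<longrightarrow> d r x y < ennreal \<epsilon> \<longrightarrow>
         (\<exists>\<delta>>0. d (r + \<delta>) x y < ennreal \<epsilon>)) \<and>
     (\<forall>x y z r1 r2 r3. r1 > 0 \<longrightarrow> r2 > 0 \<longrightarrow> r3 > 0 \<longrightarrow>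
         d (r1 + r2 + r3) x y < ennreal r3 \<longrightarrow> d (r1 + r2 + r3) y z < ennreal r2 \<longrightarrow>
         d r1 x z \<le> d (r1 + r2 + r3) x y + d (r1 + r2 + r3) y z)"

definition dr_plot :: "(real \<Rightarrow> 'a \<Rightarrow> 'a \<Rightarrow> ennreal) \<Rightarrow> (real^'n) set \<Rightarrow> (real^'n \<Rightarrow> 'a) \<Rightarrow> bool" where
  "dr_plot d U p \<longleftrightarrow> open U \<and>
     (\<forall>t0\<in>U. \<exists>\<delta>>0. ball t0 \<delta> \<subseteq> U \<and>
        (\<forall>r>0. (\<forall>t\<in>ball t0 \<delta>. d r (p t0) (p t) \<noteq> \<infinity>) \<and>
               continuous_on (ball t0 \<delta>) (\<lambda>t. enn2real (d r (p t0) (p t)))) \<and>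
        (\<forall>t1\<in>ball t0 \<delta>. p t1 \<noteq> p t0 \<longrightarrow>
           (\<forall>r>0. smooth_at_pt (\<lambda>t. d r (p t1) (p t)) t0)))"

definition dr_open :: "(real \<Rightarrow> 'a \<Rightarrow> 'a \<Rightarrow> ennreal) \<Rightarrow> 'a set \<Rightarrow> bool" where
  "dr_open d W \<longleftrightarrow> (\<forall>x\<in>W. \<exists>r>0. \<exists>\<epsilon>>0. {y. d r x y < ennreal \<epsilon>} \<subseteq> W)"

end

theory Submission
  imports Defs
begin

text \<open>Only self-distance and the continuity clause (1) of plots are needed: if p t0 lies in
  an open W, some d_r-ball around p t0 lies in W, and t \<mapsto> d_r(p t0, p t) is continuous
  at t0 with value 0 there, so p maps a neighbourhood of t0 into that ball.\<close>

lemma weaker_dr_axioms_self_distance: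
  assumes "weaker_dr_axioms d" "r > 0"
  shows "d r x x = 0"
  using assms unfolding weaker_dr_axioms_def by blast

lemma open_iff_eventually_nhds:
  "open S \<longleftrightarrow> (\<forall>x\<in>S. \<forall>\<^sub>F y in nhds x. y \<in> S)"
proof
  show "open S \<Longrightarrow> \<forall>x\<in>S. \<forall>\<^sub>F y in nhds x. y \<in> S"
    by (simp add: eventually_nhds_in_open)
  assume nhds: "\<forall>x\<in>S. \<forall>\<^sub>F y in nhds x. y \<in> S"
  show "open S"
    unfolding open_subopen[of S]
  proof
    fix x assume "x \<in> S"
    with nhds obtain T where "open T" "x \<in> T" "\<forall>y\<in>T. y \<in> S"
      unfolding eventually_nhds by blast
    then show "\<exists>T. open T \<and> x \<in> T \<and> T \<subseteq> S" by blast
  qed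
qed

lemma isCont_dr_plot_center:
  assumes "dr_plot d U p" "t0 \<in> U" "r > 0"
  shows "isCont (\<lambda>t. d r (p t0) (p t)) t0"
proof -
  from assms(1,2) obtain \<delta> where "\<delta> > 0"
    and near_center: "\<forall>r>0. (\<forall>t\<in>ball t0 \<delta>. d r (p t0) (p t) \<noteq> \<infinity>) \<and>
      continuous_on (ball t0 \<delta>) (\<lambda>t. enn2real (d r (p t0) (p t)))"
    unfolding dr_plot_def by blast
  with \<open>r > 0\<close> have finite: "\<forall>t\<in>ball t0 \<delta>. d r (p t0) (p t) \<noteq> \<infinity>"
    and cont: "continuous_on (ball t0 \<delta>) (\<lambda>t. enn2real (d r (p t0) (p t)))"
    by simp_all
  have "continuous_on (ball t0 \<delta>) (\<lambda>t. ennreal (enn2real (d r (p t0) (p t))))"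
    using cont by (rule continuous_on_ennreal)
  moreover have "\<And>t. t \<in> ball t0 \<delta> \<Longrightarrow> ennreal (enn2real (d r (p t0) (p t))) = d r (p t0) (p t)"
    using finite by (simp add: ennreal_enn2real_if)
  ultimately have "continuous_on (ball t0 \<delta>) (\<lambda>t. d r (p t0) (p t))"
    by (rule continuous_on_eq)
  then show ?thesis
    using \<open>\<delta> > 0\<close> by (simp add: continuous_on_eq_continuous_at)
qed

theorem propositionA2:
  fixes d :: "real \<Rightarrow> 'a \<Rightarrow> 'a \<Rightarrow> ennreal"
    and W :: "'a set"
  assumes "weaker_dr_axioms d"
    and "dr_open d W"
  shows "\<forall>(U :: (real^'n) set) p. dr_plot d U p \<longrightarrow> open {t\<in>U. p t \<in> W}"
proof (intro allI impI)
  fix U :: "(real^'n) set" and p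
  assume plot: "dr_plot d U p"
  show "open {t\<in>U. p t \<in> W}"
    unfolding open_iff_eventually_nhds
  proof
    fix t0 assume "t0 \<in> {t\<in>U. p t \<in> W}"
    then obtain r \<epsilon> where "t0 \<in> U" "r > 0" "\<epsilon> > 0"
      and ball_in_W: "{y. d r (p t0) y < ennreal \<epsilon>} \<subseteq> W"
      using assms(2) unfolding dr_open_def by blast
    have "((\<lambda>t. d r (p t0) (p t)) \<longlongrightarrow> d r (p t0) (p t0)) (nhds t0)"
      using isCont_dr_plot_center[OF plot \<open>t0 \<in> U\<close> \<open>r > 0\<close>]
      unfolding isCont_def by (rule tendsto_at_iff_tendsto_nhds[THEN iffD1])
    moreover have "d r (p t0) (p t0) < ennreal \<epsilon>"
      using weaker_dr_axioms_self_distance[OF assms(1) \<open>r > 0\<close>] \<open>\<epsilon> > 0\<close> by simp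
    ultimately have "\<forall>\<^sub>F t in nhds t0. d r (p t0) (p t) < ennreal \<epsilon>"
      by (rule order_tendstoD(2))
    moreover have "\<forall>\<^sub>F t in nhds t0. t \<in> U"
      using plot \<open>t0 \<in> U\<close> by (intro eventually_nhds_in_open) (simp add: dr_plot_def)
    ultimately show "\<forall>\<^sub>F t in nhds t0. t \<in> {t\<in>U. p t \<in> W}"
      by eventually_elim (use ball_in_W in blast)
  qed
qed

end
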